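(* Let $q$ be a prime power, let $r,m>1$ be integers, $n=rm$, and let $k$ be a positive integer with $k\le m$. Let $V_1\in\mathcal{G}_q(m,k)$, let $\Phi:\mathbb{F}_{q^m}\to\mathbb{F}_{q^n}$ be an injective $\mathbb{F}_q$-linear map and put $V_2=\Phi(\mathbb{F}_{q^m})\in\mathcal{G}_q(n,m)$. Let $\mathcal{C}_2=\mathrm{Orb}_{\mathbb{F}_{q^n}^*}(V_2)$ and $\mathcal{C}_1=\mathrm{Orb}_{\mathbb{F}_{q^m}^*}(V_1)$. If $\mathcal{C}_2$ is full-length and $d(\mathcal{C}_2)>2(m-k)$, then the one-orbit code $\mathcal{C}_2\odot V_1:=\mathrm{Orb}_{\mathbb{F}_{q^n}^*}(\Phi(V_1))\subseteq\mathcal{G}_q(n,k)$ is full-length, and the multi-orbit code $\mathcal{C}_2\odot\mathcal{C}_1:=\bigcup_{\alpha\in\mathbb{F}_{q^m}^*}\mathrm{Orb}_{\mathbb{F}_{q^n}^*}(\Phi(\alpha V_1))\subseteq\mathcal{G}_q(n,k)$ is full-length.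
   Context: For positive integers $k\le N$, $\mathcal{G}_q(N,k)$ denotes the set of $k$-dimensional $\mathbb{F}_q$-subspaces of $\mathbb{F}_{q^N}$ (viewed as an $N$-dimensional $\mathbb{F}_q$-vector space). The subspace distance is $d(U,V)=\dim_{\mathbb{F}_q}(U+V)-\dim_{\mathbb{F}_q}(U\cap V)$, and for a code $\mathcal{C}$ (set of subspaces) $d(\mathcal{C})=\min\{d(U,V):U,V\in\mathcal{C},U\neq V\}$. For $V\in\mathcal{G}_q(N,k)$, $\mathrm{Orb}_{\mathbb{F}_{q^N}^*}(V)=\{\beta V:\beta\in\mathbb{F}_{q^N}^*\}$. A one-orbit code $\mathrm{Orb}_{\mathbb{F}_{q^N}^*}(V)$ is called full-length if $\{\beta\in\mathbb{F}_{q^N}^*:\beta V=V\}=\mathbb{F}_q^*$; a union of orbits $\bigcup_i \mathrm{Orb}(V_i)$ is called full-length if every $\mathrm{Orb}(V_i)$ is full-length. *)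

theory Defs
  imports Main "HOL.Vector_Spaces"
begin

text \<open>F_q is modelled by a finite field type 'f; an extension field F_{q^N} by a finite
field type 'b together with a field embedding of 'f into 'b.\<close>

definition field_emb :: "('f::field \<Rightarrow> 'b::field) \<Rightarrow> bool" where
  "field_emb \<iota> \<longleftrightarrow> \<iota> 1 = 1 \<and> (\<forall>a b. \<iota> (a + b) = \<iota> a + \<iota> b) \<and> (\<forall>a b. \<iota> (a * b) = \<iota> a * \<iota> b)"

definition fscale :: "('f::field \<Rightarrow> 'b::field) \<Rightarrow> 'f \<Rightarrow> 'b \<Rightarrow> 'b" where
  "fscale \<iota> c x = \<iota> c * x"

definition sdim :: "('f::field \<Rightarrow> 'b::field) \<Rightarrow> 'b set \<Rightarrow> nat" where
  "sdim \<iota> U = vector_space.dim (fscale \<iota>) U"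

definition Grass :: "('f::field \<Rightarrow> 'b::field) \<Rightarrow> nat \<Rightarrow> 'b set set" where
  "Grass \<iota> k = {U. module.subspace (fscale \<iota>) U \<and> sdim \<iota> U = k}"

definition set_plus :: "'b::plus set \<Rightarrow> 'b set \<Rightarrow> 'b set" where
  "set_plus U V = {u + v | u v. u \<in> U \<and> v \<in> V}"

definition sdist :: "('f::field \<Rightarrow> 'b::field) \<Rightarrow> 'b set \<Rightarrow> 'b set \<Rightarrow> nat" where
  "sdist \<iota> U V = sdim \<iota> (set_plus U V) - sdim \<iota> (U \<inter> V)"

definition code_dist :: "('f::field \<Rightarrow> 'b::field) \<Rightarrow> 'b set set \<Rightarrow> nat" where
  "code_dist \<iota> C = Min {sdist \<iota> U V | U V. U \<in> C \<and> V \<in> C \<and> U \<noteq> V}"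

definition orb :: "'b::field set \<Rightarrow> 'b set set" where
  "orb V = {(\<lambda>x. \<beta> * x) ` V | \<beta>. \<beta> \<noteq> 0}"

definition stab :: "'b::field set \<Rightarrow> 'b set" where
  "stab V = {\<beta>. \<beta> \<noteq> 0 \<and> (\<lambda>x. \<beta> * x) ` V = V}"

text \<open>The one-orbit code Orb(V) is full-length iff its stabilizer is exactly F_q^*.\<close>
definition full_length :: "('f::field \<Rightarrow> 'b::field) \<Rightarrow> 'b set \<Rightarrow> bool" where
  "full_length \<iota> V \<longleftrightarrow> stab V = \<iota> ` (UNIV - {0})"

end

theory Submission
  imports Defs "HOL-Library.FuncSet"
begin

text \<open>Multiplication by a nonzero element of F_q fixes every F_q-subspace, so full-length
  only asks that no other \<beta> stabilizes X = \<Phi>(V1). If some \<beta> outside F_q did, then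
  S = \<Phi>(F_{q^m}) and \<beta>S would be distinct codewords of Orb(S) both containing X = \<beta>X, so
  d(S, \<beta>S) = 2 (dim S - dim (S \<inter> \<beta>S)) \<le> 2 (m - k), against the distance hypothesis.
  Since \<alpha>V1 is again in G_q(m,k) for \<alpha> \<noteq> 0, the multi-orbit code is covered by the same
  argument.\<close>

lemma field_emb_vector_space: "field_emb \<iota> \<Longrightarrow> vector_space (fscale \<iota>)"
  unfolding vector_space_def field_emb_def fscale_def
  by (auto simp: algebra_simps)

lemma field_emb_nonzero:
  assumes "field_emb \<iota>" "c \<noteq> 0"
  shows "\<iota> c \<noteq> 0"
proof
  assume "\<iota> c = 0"
  then have "\<iota> (c * inverse c) = 0" using assms(1) unfolding field_emb_def by simp
  then show False using assms unfolding field_emb_def by simp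
qed

lemma field_emb_finite_dimensional:
  fixes \<iota> :: "'f::field \<Rightarrow> 'b::{field,finite}"
  assumes "field_emb \<iota>"
  obtains B where "finite_dimensional_vector_space (fscale \<iota>) B"
proof -
  interpret vector_space "fscale \<iota>" by (rule field_emb_vector_space[OF assms])
  obtain B where "independent B" "UNIV \<subseteq> span B" using basis_exists[of UNIV] by metis
  then have "finite_dimensional_vector_space (fscale \<iota>) B"
    by unfold_locales auto
  then show thesis by (rule that)
qed

lemma linear_fscale_mult:
  "field_emb \<iota> \<Longrightarrow> Vector_Spaces.linear (fscale \<iota>) (fscale \<iota>) (\<lambda>x. \<beta> * x)"
  using field_emb_vector_space unfolding linear_iff fscale_def by (simp add: algebra_simps)

lemma card_power_sdim_le_card:
  fixes \<iota> :: "'f::{field,finite} \<Rightarrow> 'b::{field,finite}"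
  assumes "field_emb \<iota>"
  shows "card (UNIV::'f set) ^ sdim \<iota> UNIV \<le> card (UNIV::'b set)"
proof -
  interpret vector_space "fscale \<iota>" by (rule field_emb_vector_space[OF assms])
  obtain B where B: "independent B" "card B = dim UNIV"
    using basis_exists[of UNIV] by metis
  have "finite B" by simp
  define comb where "comb h = (\<Sum>v\<in>B. fscale \<iota> (h v) v)" for h
  have "inj_on comb (B \<rightarrow>\<^sub>E UNIV)"
  proof (rule inj_onI)
    fix h1 h2 assume h: "h1 \<in> B \<rightarrow>\<^sub>E UNIV" "h2 \<in> B \<rightarrow>\<^sub>E UNIV" "comb h1 = comb h2"
    then have "(\<Sum>v\<in>B. fscale \<iota> (h1 v - h2 v) v) = 0"
      unfolding comb_def by (simp add: scale_left_diff_distrib sum_subtractf)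
    then have "\<forall>v\<in>B. h1 v - h2 v = 0"
      using B(1) dependent_finite[OF \<open>finite B\<close>] by fastforce
    then show "h1 = h2" using h(1,2) by (auto intro: PiE_ext)
  qed
  then have "card (B \<rightarrow>\<^sub>E (UNIV::'f set)) \<le> card (UNIV::'b set)"
    using card_inj_on_le by fastforce
  then show ?thesis
    using B(2) card_PiE[OF \<open>finite B\<close>, of "\<lambda>_. UNIV::'f set"] unfolding sdim_def by simp
qed

lemma sdim_UNIV_le:
  fixes \<iota> :: "'f::{field,finite} \<Rightarrow> 'b::{field,finite}"
  assumes "field_emb \<iota>" "card (UNIV::'b set) = card (UNIV::'f set) ^ m"
  shows "sdim \<iota> UNIV \<le> m"
proof -
  have "card {0::'f, 1} \<le> card (UNIV::'f set)" by (rule card_mono) auto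
  then have "card (UNIV::'f set) > 1" by simp
  then show ?thesis
    using card_power_sdim_le_card[OF assms(1)] assms(2) by simp
qed

lemma UNIV_in_Grass: "field_emb \<iota> \<Longrightarrow> UNIV \<in> Grass \<iota> (sdim \<iota> UNIV)"
proof -
  assume "field_emb \<iota>"
  then interpret vector_space "fscale \<iota>" by (rule field_emb_vector_space)
  show ?thesis unfolding Grass_def by simp
qed

lemma linear_image_in_Grass:
  fixes \<iota>1 :: "'f::field \<Rightarrow> 'a::{field,finite}" and \<iota>2 :: "'f \<Rightarrow> 'b::{field,finite}"
  assumes "field_emb \<iota>1" "field_emb \<iota>2"
    and lin: "Vector_Spaces.linear (fscale \<iota>1) (fscale \<iota>2) g" and "inj g"
    and V: "V \<in> Grass \<iota>1 k"
  shows "g ` V \<in> Grass \<iota>2 k"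
proof -
  obtain B1 where "finite_dimensional_vector_space (fscale \<iota>1) B1"
    using field_emb_finite_dimensional[OF assms(1)] .
  then interpret finite_dimensional_vector_space_pair_1 "fscale \<iota>1" B1 "fscale \<iota>2"
    using field_emb_vector_space[OF assms(2)]
    by (simp add: finite_dimensional_vector_space_pair_1_def)
  interpret g: Vector_Spaces.linear "fscale \<iota>1" "fscale \<iota>2" g by (rule lin)
  have "vs2.subspace (g ` V)" using V g.subspace_image unfolding Grass_def by blast
  moreover have "vs2.dim (g ` V) = vs1.dim V"
    using \<open>inj g\<close> by (intro dim_image_eq[OF lin]) (auto intro: inj_on_subset)
  ultimately show ?thesis using V unfolding Grass_def sdim_def by simp
qed

lemma mult_image_in_Grass:
  fixes \<iota> :: "'f::field \<Rightarrow> 'b::{field,finite}"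
  assumes "field_emb \<iota>" "\<beta> \<noteq> 0" "U \<in> Grass \<iota> k"
  shows "(\<lambda>x. \<beta> * x) ` U \<in> Grass \<iota> k"
  using assms(2)
  by (intro linear_image_in_Grass[OF assms(1,1) linear_fscale_mult[OF assms(1)] _ assms(3)])
    (auto simp: inj_def)

lemma orb_subset_Grass:
  fixes \<iota> :: "'f::field \<Rightarrow> 'b::{field,finite}"
  assumes "field_emb \<iota>" "U \<in> Grass \<iota> k"
  shows "orb U \<subseteq> Grass \<iota> k"
  using mult_image_in_Grass[OF assms(1) _ assms(2)] unfolding orb_def by blast

lemma sdist_eq_sdim_Int:
  fixes \<iota> :: "'f::field \<Rightarrow> 'b::{field,finite}"
  assumes "field_emb \<iota>" "module.subspace (fscale \<iota>) U" "module.subspace (fscale \<iota>) W"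
  shows "sdist \<iota> U W = sdim \<iota> U + sdim \<iota> W - 2 * sdim \<iota> (U \<inter> W)"
proof -
  obtain B where "finite_dimensional_vector_space (fscale \<iota>) B"
    using field_emb_finite_dimensional[OF assms(1)] .
  then interpret finite_dimensional_vector_space "fscale \<iota>" B .
  have "dim (set_plus U W) + dim (U \<inter> W) = dim U + dim W"
    unfolding set_plus_def using assms(2,3) by (rule dim_sums_Int)
  then show ?thesis unfolding sdist_def sdim_def by simp
qed

lemma code_dist_le_sdist:
  fixes \<iota> :: "'f::field \<Rightarrow> 'b::{field,finite}"
  assumes "U \<in> C" "W \<in> C" "U \<noteq> W"
  shows "code_dist \<iota> C \<le> sdist \<iota> U W"
proof -
  have "finite {sdist \<iota> U W | U W. U \<in> C \<and> W \<in> C \<and> U \<noteq> W}"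
    by (rule finite_subset[of _ "case_prod (sdist \<iota>) ` UNIV"]) auto
  then show ?thesis unfolding code_dist_def by (rule Min_le) (use assms in blast)
qed

lemma emb_units_subset_stab:
  assumes "field_emb \<iota>" and X: "module.subspace (fscale \<iota>) X"
  shows "\<iota> ` (UNIV - {0}) \<subseteq> stab X"
proof
  fix \<beta> assume "\<beta> \<in> \<iota> ` (UNIV - {0})"
  then obtain c where c: "c \<noteq> 0" "\<beta> = \<iota> c" by auto
  interpret vector_space "fscale \<iota>" by (rule field_emb_vector_space[OF assms(1)])
  have scale_closed: "\<iota> d * x \<in> X" if "x \<in> X" for d x
    using subspace_scale[OF X that] unfolding fscale_def .
  have "\<iota> (inverse c) * \<beta> = 1"
    using assms(1) c unfolding field_emb_def by (metis left_inverse)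
  then have "x = \<beta> * (\<iota> (inverse c) * x)" for x
    by (metis mult.assoc mult.commute mult_1)
  then have "X \<subseteq> (\<lambda>x. \<beta> * x) ` X" using scale_closed by blast
  moreover have "(\<lambda>x. \<beta> * x) ` X \<subseteq> X" using scale_closed c(2) by auto
  ultimately show "\<beta> \<in> stab X"
    unfolding stab_def using field_emb_nonzero[OF assms(1) c(1)] c(2) by auto
qed

lemma full_length_subspace:
  fixes \<iota> :: "'f::field \<Rightarrow> 'b::{field,finite}"
  assumes \<iota>: "field_emb \<iota>" and S: "module.subspace (fscale \<iota>) S" "full_length \<iota> S"
    and X: "module.subspace (fscale \<iota>) X" "X \<subseteq> S"
    and dist: "2 * (sdim \<iota> S - sdim \<iota> X) < code_dist \<iota> (orb S)"
  shows "full_length \<iota> X"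
proof -
  have "stab X \<subseteq> \<iota> ` (UNIV - {0})"
  proof
    fix \<beta> assume \<beta>: "\<beta> \<in> stab X"
    then have "\<beta> \<noteq> 0" and X_eq: "(\<lambda>x. \<beta> * x) ` X = X" unfolding stab_def by auto
    define W where "W = (\<lambda>x. \<beta> * x) ` S"
    show "\<beta> \<in> \<iota> ` (UNIV - {0})"
    proof (rule ccontr)
      assume "\<beta> \<notin> \<iota> ` (UNIV - {0})"
      then have "S \<noteq> W"
        using S(2) \<open>\<beta> \<noteq> 0\<close> unfolding full_length_def stab_def W_def
        by (metis (mono_tags, lifting) mem_Collect_eq)
      moreover have "S \<in> orb S" "W \<in> orb S"
        unfolding orb_def W_def using \<open>\<beta> \<noteq> 0\<close> by (force, blast)
      ultimately have "code_dist \<iota> (orb S) \<le> sdist \<iota> S W"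
        by (intro code_dist_le_sdist)
      obtain B where "finite_dimensional_vector_space (fscale \<iota>) B"
        using field_emb_finite_dimensional[OF \<iota>] .
      then interpret finite_dimensional_vector_space "fscale \<iota>" B .
      have "S \<in> Grass \<iota> (sdim \<iota> S)" using S(1) unfolding Grass_def by simp
      then have W: "W \<in> Grass \<iota> (sdim \<iota> S)"
        unfolding W_def by (rule mult_image_in_Grass[OF \<iota> \<open>\<beta> \<noteq> 0\<close>])
      have "X \<subseteq> S \<inter> W" using X(2) X_eq unfolding W_def by blast
      then have "sdim \<iota> X \<le> sdim \<iota> (S \<inter> W)" unfolding sdim_def by (rule dim_subset)
      then have "sdist \<iota> S W \<le> 2 * (sdim \<iota> S - sdim \<iota> X)"
        using sdist_eq_sdim_Int[OF \<iota> S(1), of W] W unfolding Grass_def by auto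
      then show False using dist \<open>code_dist \<iota> (orb S) \<le> sdist \<iota> S W\<close> by linarith
    qed
  qed
  then show ?thesis
    unfolding full_length_def using emb_units_subset_stab[OF \<iota> X(1)] by blast
qed

theorem proposition2p6:
  fixes \<iota>1 :: "'f::{field,finite} \<Rightarrow> 'a::{field,finite}"
    and \<iota>2 :: "'f \<Rightarrow> 'b::{field,finite}"
    and \<Phi> :: "'a \<Rightarrow> 'b"
    and q r m n k :: nat
    and V1 :: "'a set"
  assumes "card (UNIV :: 'f set) = q"
    and "field_emb \<iota>1" and "field_emb \<iota>2"
    and "card (UNIV :: 'a set) = q ^ m" and "card (UNIV :: 'b set) = q ^ n"
    and "r > 1" and "m > 1" and "n = r * m"
    and "0 < k" and "k \<le> m"
    and "V1 \<in> Grass \<iota>1 k"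
    and "Vector_Spaces.linear (fscale \<iota>1) (fscale \<iota>2) \<Phi>" and "inj \<Phi>"
    and "full_length \<iota>2 (\<Phi> ` UNIV)"
    and "code_dist \<iota>2 (orb (\<Phi> ` UNIV)) > 2 * (m - k)"
  shows "orb (\<Phi> ` V1) \<subseteq> Grass \<iota>2 k \<and> full_length \<iota>2 (\<Phi> ` V1)
    \<and> (\<forall>\<alpha>::'a. \<alpha> \<noteq> 0 \<longrightarrow>
          orb (\<Phi> ` ((\<lambda>x. \<alpha> * x) ` V1)) \<subseteq> Grass \<iota>2 k
        \<and> full_length \<iota>2 (\<Phi> ` ((\<lambda>x. \<alpha> * x) ` V1)))"
proof -
  note embs = assms(2,3) and \<Phi> = assms(12,13)
  have S: "\<Phi> ` UNIV \<in> Grass \<iota>2 (sdim \<iota>1 UNIV)"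
    by (rule linear_image_in_Grass[OF embs \<Phi> UNIV_in_Grass[OF assms(2)]])
  \<comment> \<open>The size hypotheses matter only through \<open>dim S \<le> m\<close>.\<close>
  have "sdim \<iota>1 UNIV \<le> m" using sdim_UNIV_le assms(1,2,4) by blast
  have image_code: "orb (\<Phi> ` V) \<subseteq> Grass \<iota>2 k \<and> full_length \<iota>2 (\<Phi> ` V)"
    if V: "V \<in> Grass \<iota>1 k" for V
  proof
    have X: "\<Phi> ` V \<in> Grass \<iota>2 k" by (rule linear_image_in_Grass[OF embs \<Phi> V])
    then show "orb (\<Phi> ` V) \<subseteq> Grass \<iota>2 k" by (rule orb_subset_Grass[OF assms(3)])
    show "full_length \<iota>2 (\<Phi> ` V)"
      using S X \<open>sdim \<iota>1 UNIV \<le> m\<close> assms(15) unfolding Grass_def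
      by (intro full_length_subspace[OF assms(3) _ assms(14)]) auto
  qed
  show ?thesis
    using image_code[OF assms(11)] image_code[OF mult_image_in_Grass[OF assms(2) _ assms(11)]]
    by blast
qed

end
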